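(* Let $S=\{a_i \bmod d_i : 1\le i\le r\}$ be an exact covering system and $G_S$ its exact covering system digraph, with predecessor function $P$. Then for every $n\in\mathbb{Z}$ there is an ancestor $m$ of $n$ such that $|P(m)|\ge |m|$. Moreover, if the degree $r$ of $G_S$ is at least $2$, there exists $N\in\mathbb{N}$ such that for every $m\in\mathbb{Z}$ with $|P(m)|\ge|m|$ we have $|m|\le N$.
   Context: A system of congruences $S=\{a_i \bmod d_i : 1\le i\le r\}$ with integers $a_i$ and nonzero integers $d_i$ (negative $d_i$ allowed; $n\equiv a \bmod -d$ means $n\equiv a\bmod d$) is an exact covering system if every integer satisfies exactly one of the congruences; congruences are distinguished by their chosen representatives $a_i$. The exact covering system digraph $G_S$ has vertex set $\mathbb{Z}$ and edges $(n,d_in+a_i)$ for all $n\in\mathbb{Z}$, $1\le i\le r$; $r$ is its degree. Every vertex has indegree exactly one, and the predecessor $P(n)$ is the unique integer with $(P(n),n)$ an edge. $P^k$ denotes the $k$-fold composition; $m$ is an ancestor of $n$ if $m=P^k(n)$ for some $k\in\mathbb{N}$. *)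

theory Defs
  imports Main
begin

text \<open>A system of congruences is a list of pairs (a_i, d_i), i < r = length S.
  Congruences are distinguished by their index (hence a list, not a set).\<close>

definition exact_covering_system :: "(int \<times> int) list \<Rightarrow> bool" where
  "exact_covering_system S \<longleftrightarrow>
     (\<forall>i<length S. snd (S ! i) \<noteq> 0) \<and>
     (\<forall>n::int. \<exists>!i. i < length S \<and> snd (S ! i) dvd (n - fst (S ! i)))"

definition ecs_edge :: "(int \<times> int) list \<Rightarrow> int \<Rightarrow> int \<Rightarrow> bool" where
  "ecs_edge S n m \<longleftrightarrow> (\<exists>i<length S. m = snd (S ! i) * n + fst (S ! i))"

definition ecs_pred :: "(int \<times> int) list \<Rightarrow> int \<Rightarrow> int" where
  "ecs_pred S n = (THE p. ecs_edge S p n)"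

definition ecs_ancestor :: "(int \<times> int) list \<Rightarrow> int \<Rightarrow> int \<Rightarrow> bool" where
  "ecs_ancestor S m n \<longleftrightarrow> (\<exists>k::nat. m = (ecs_pred S ^^ k) n)"

end

theory Submission
  imports Defs
begin

text \<open>Going up the ancestor chain, \<open>\<bar>P m\<bar> < \<bar>m\<bar>\<close> cannot hold forever, since absolute values
  cannot decrease indefinitely. If there are at least two congruences, no modulus is \<open>\<plusminus>1\<close>
  (such a congruence alone would cover \<open>\<int>\<close>), so \<open>m = d\<^sub>i P(m) + a\<^sub>i\<close> with \<open>\<bar>d\<^sub>i\<bar> \<ge> 2\<close> and
  \<open>\<bar>P m\<bar> \<ge> \<bar>m\<bar>\<close> gives \<open>\<bar>m\<bar> \<le> \<bar>a\<^sub>i\<bar>\<close>.\<close>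

lemma ex_funpow_abs_le_step:
  fixes f :: "int \<Rightarrow> int"
  shows "\<exists>k. \<bar>(f ^^ k) n\<bar> \<le> \<bar>f ((f ^^ k) n)\<bar>"
proof (induction "nat \<bar>n\<bar>" arbitrary: n rule: less_induct)
  case less
  show ?case
  proof (cases "\<bar>n\<bar> \<le> \<bar>f n\<bar>")
    case True
    then show ?thesis by (intro exI[of _ 0]) simp
  next
    case False
    then have "nat \<bar>f n\<bar> < nat \<bar>n\<bar>" by simp
    from less[OF this] obtain k where "\<bar>(f ^^ k) (f n)\<bar> \<le> \<bar>f ((f ^^ k) (f n))\<bar>"
      by blast
    then show ?thesis by (intro exI[of _ "Suc k"]) (simp only: funpow_Suc_right o_apply)
  qed
qed

lemma abs_le_abs_offset:
  fixes m d p a :: int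
  assumes "2 \<le> \<bar>d\<bar>" and "m = d * p + a" and "\<bar>m\<bar> \<le> \<bar>p\<bar>"
  shows "\<bar>m\<bar> \<le> \<bar>a\<bar>"
proof -
  have "2 * \<bar>p\<bar> \<le> \<bar>d\<bar> * \<bar>p\<bar>" using assms(1) by (simp add: mult_right_mono)
  also have "\<dots> = \<bar>m - a\<bar>" using assms(2) by (simp add: abs_mult)
  finally show ?thesis using assms(3) by linarith
qed

lemma exact_covering_system_modulus_nonzero:
  assumes "exact_covering_system S" and "i < length S"
  shows "snd (S ! i) \<noteq> 0"
  using assms unfolding exact_covering_system_def by blast

lemma exact_covering_system_unique:
  assumes "exact_covering_system S"
    and "i < length S" and "snd (S ! i) dvd (n - fst (S ! i))"
    and "j < length S" and "snd (S ! j) dvd (n - fst (S ! j))"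
  shows "i = j"
  using assms unfolding exact_covering_system_def by blast

lemma ecs_pred_eq:
  assumes S: "exact_covering_system S"
    and i: "i < length S" and dvd: "snd (S ! i) dvd (n - fst (S ! i))"
  shows "ecs_pred S n = (n - fst (S ! i)) div snd (S ! i)"
  unfolding ecs_pred_def
proof (rule the_equality)
  show "ecs_edge S ((n - fst (S ! i)) div snd (S ! i)) n"
    unfolding ecs_edge_def using i dvd by (intro exI[of _ i]) auto
next
  fix p assume "ecs_edge S p n"
  then obtain j where j: "j < length S" "n = snd (S ! j) * p + fst (S ! j)"
    unfolding ecs_edge_def by blast
  then have "j = i"
    using exact_covering_system_unique[OF S _ _ i dvd] by simp
  then show "p = (n - fst (S ! i)) div snd (S ! i)"
    using j exact_covering_system_modulus_nonzero[OF S i] by simp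
qed

lemma ecs_edge_ecs_pred:
  assumes S: "exact_covering_system S"
  shows "ecs_edge S (ecs_pred S n) n"
proof -
  obtain i where i: "i < length S" and dvd: "snd (S ! i) dvd (n - fst (S ! i))"
    using S unfolding exact_covering_system_def by blast
  then have "n = snd (S ! i) * ecs_pred S n + fst (S ! i)"
    using ecs_pred_eq[OF S i dvd] by simp
  then show ?thesis unfolding ecs_edge_def using i by blast
qed

lemma exact_covering_system_abs_modulus_ge_2:
  assumes S: "exact_covering_system S" and "2 \<le> length S" and i: "i < length S"
  shows "2 \<le> \<bar>snd (S ! i)\<bar>"
proof (rule ccontr)
  assume "\<not> ?thesis"
  then have unit: "snd (S ! i) = 1 \<or> snd (S ! i) = -1"
    using exact_covering_system_modulus_nonzero[OF S i] by linarith
  define j :: nat where "j = (if i = 0 then 1 else 0)"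
  have j: "j < length S" "j \<noteq> i" using assms unfolding j_def by auto
  have "snd (S ! i) dvd (fst (S ! j) - fst (S ! i))" using unit by auto
  then show False
    using exact_covering_system_unique[OF S i _ j(1), of "fst (S ! j)"] j(2) by simp
qed

theorem mainTheorem4:
  fixes S :: "(int \<times> int) list"
  assumes "exact_covering_system S"
  shows "(\<forall>n::int. \<exists>m. ecs_ancestor S m n \<and> \<bar>ecs_pred S m\<bar> \<ge> \<bar>m\<bar>)
         \<and> (length S \<ge> 2 \<longrightarrow>
              (\<exists>N::nat. \<forall>m::int. \<bar>ecs_pred S m\<bar> \<ge> \<bar>m\<bar> \<longrightarrow> \<bar>m\<bar> \<le> int N))"
proof (intro conjI allI impI)
  fix n :: int
  show "\<exists>m. ecs_ancestor S m n \<and> \<bar>ecs_pred S m\<bar> \<ge> \<bar>m\<bar>"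
    using ex_funpow_abs_le_step[of "ecs_pred S" n] unfolding ecs_ancestor_def by blast
next
  assume "length S \<ge> 2"
  show "\<exists>N::nat. \<forall>m::int. \<bar>ecs_pred S m\<bar> \<ge> \<bar>m\<bar> \<longrightarrow> \<bar>m\<bar> \<le> int N"
  proof (intro exI[of _ "sum_list (map (\<lambda>x. nat \<bar>fst x\<bar>) S)"] allI impI)
    fix m :: int
    assume "\<bar>ecs_pred S m\<bar> \<ge> \<bar>m\<bar>"
    moreover obtain i where i: "i < length S" "m = snd (S ! i) * ecs_pred S m + fst (S ! i)"
      using ecs_edge_ecs_pred[OF assms] unfolding ecs_edge_def by blast
    ultimately have "\<bar>m\<bar> \<le> \<bar>fst (S ! i)\<bar>"
      using abs_le_abs_offset exact_covering_system_abs_modulus_ge_2[OF assms \<open>length S \<ge> 2\<close>]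
      by blast
    moreover have "nat \<bar>fst (S ! i)\<bar> \<le> sum_list (map (\<lambda>x. nat \<bar>fst x\<bar>) S)"
      using i(1) by (intro member_le_sum_list) auto
    ultimately show "\<bar>m\<bar> \<le> int (sum_list (map (\<lambda>x. nat \<bar>fst x\<bar>) S))" by linarith
  qed
qed

end
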